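(* Let $(S,\omega)$ be a real symplectic vector space of dimension $2$ with positive polarization $E$, and let $(g,z)\in\mathrm{Mp}_*(S,E)$ (so $\operatorname{tr}(g)\neq2$). Let $k\in\mathbb Z$ be such that $\arg(z)\in[k\tfrac\pi2,(k+1)\tfrac\pi2)$ and let $\epsilon=0$ if $\operatorname{tr}(g)>2$ and $\epsilon=1$ otherwise. Then $$m(g,z)=k+\tfrac12\big(1-(-1)^{k+\epsilon}\big)\mod 4.$$
   Context: A positive polarization of $S$ is a Lagrangian subspace $E\subset S\otimes\mathbb C$ with $\frac1i\omega(x,\bar x)>0$ for all nonzero $x\in E$. For positive polarizations $E_a,E_b$, $\pi_{E_b,E_a}:E_b\to E_a$ is the restriction to $E_b$ of the projection onto $E_a$ with kernel $\overline{E_b}$; $\Psi_{E_a,E_b}:=\pi_{E_b,E_a}^*$ on top exterior powers of duals; $\zeta(E_a,E_b,E_c)$ is defined by $\Psi_{E_a,E_c}=\zeta(E_a,E_b,E_c)\Psi_{E_b,E_c}\circ\Psi_{E_a,E_b}$ and $\zeta^{1/2}$ is its continuous square root equal to $1$ when the three coincide. $\mathrm{Mp}(S,E)$ is the group of pairs $(g,z)\in\mathrm{Sp}(S)\times\mathbb C$ with $z^2=\det(g^{-1}\pi_{E,gE}:E\to E)$, product $(g',z')(g,z)=(g'g,\zeta^{1/2}(g'gE,g'E,E)z'z)$. Let $j$ be the complex structure on $S$ with $E=\ker(j-i\,\mathrm{id})$; $\mathrm{sym}(S,j)$ is the space of endomorphisms symmetric for the scalar product $\omega(X,jY)$; for $A\in\mathrm{sym}(S,j)$,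 ${\det}^{1/2}(\tfrac12\mathrm{id}+iA)$ is the square root depending continuously on $A$ and positive at $A=0$. $\mathrm{Sp}_*(S)=\{g\in\mathrm{Sp}(S):\mathrm{id}-g\text{ invertible}\}$, $A(g):=\tfrac12(\mathrm{id}+g)(\mathrm{id}-g)^{-1}j$, $\mathrm{Mp}_*(S,E)=\{(g,z)\in\mathrm{Mp}(S,E):g\in\mathrm{Sp}_*(S)\}$. The index $m(g,z)\in\mathbb Z/4\mathbb Z$ is defined by $z\,{\det}^{1/2}(\tfrac12\mathrm{id}+iA(g))=i^{m(g,z)}/|\det(\mathrm{id}-g)|^{1/2}$. The argument $\arg(z)$ is taken in $\mathbb R/2\pi\mathbb Z$ (so $k$ is determined mod 4). *)

theory Defs
  imports "HOL-Analysis.Analysis"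
begin

text \<open>The real symplectic vector space of dimension 2 is modelled as real^2 with an
  arbitrary symplectic (bilinear, antisymmetric, nondegenerate) form.\<close>

definition symplectic_form :: "(real^2 \<Rightarrow> real^2 \<Rightarrow> real) \<Rightarrow> bool" where
  "symplectic_form \<omega> \<longleftrightarrow>
     (\<forall>y. linear (\<lambda>x. \<omega> x y)) \<and> (\<forall>x. linear (\<lambda>y. \<omega> x y)) \<and>
     (\<forall>x y. \<omega> x y = - \<omega> y x) \<and>
     (\<forall>x. (\<forall>y. \<omega> x y = 0) \<longrightarrow> x = 0)"

definition cvec :: "real^2 \<Rightarrow> complex^2" where
  "cvec x = (\<chi> i. complex_of_real (x $ i))"

definition cre :: "complex^2 \<Rightarrow> real^2" where "cre u = (\<chi> i. Re (u $ i))"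
definition cim :: "complex^2 \<Rightarrow> real^2" where "cim u = (\<chi> i. Im (u $ i))"

definition cconj :: "complex^2 \<Rightarrow> complex^2" where
  "cconj u = (\<chi> i. cnj (u $ i))"

definition cmat :: "real^2^2 \<Rightarrow> complex^2^2" where
  "cmat g = (\<chi> i j. complex_of_real (g $ i $ j))"

text \<open>Complex-bilinear extension of \<omega> to S \<otimes> C.\<close>
definition omegac :: "(real^2 \<Rightarrow> real^2 \<Rightarrow> real) \<Rightarrow> complex^2 \<Rightarrow> complex^2 \<Rightarrow> complex" where
  "omegac \<omega> u v =
     Complex (\<omega> (cre u) (cre v) - \<omega> (cim u) (cim v)) (\<omega> (cre u) (cim v) + \<omega> (cim u) (cre v))"

definition csubspace :: "(complex^2) set \<Rightarrow> bool" where
  "csubspace E \<longleftrightarrow> 0 \<in> E \<and> (\<forall>x\<in>E. \<forall>y\<in>E. x + y \<in> E) \<and> (\<forall>c::complex. \<forall>x\<in>E. c *s x \<in> E)"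

definition lagrangian :: "(real^2 \<Rightarrow> real^2 \<Rightarrow> real) \<Rightarrow> (complex^2) set \<Rightarrow> bool" where
  "lagrangian \<omega> E \<longleftrightarrow> csubspace E \<and> E = {x. \<forall>y\<in>E. omegac \<omega> x y = 0}"

definition positive_polarization :: "(real^2 \<Rightarrow> real^2 \<Rightarrow> real) \<Rightarrow> (complex^2) set \<Rightarrow> bool" where
  "positive_polarization \<omega> E \<longleftrightarrow> lagrangian \<omega> E \<and>
     (\<forall>x\<in>E. x \<noteq> 0 \<longrightarrow>
        Im (omegac \<omega> x (cconj x) / \<i>) = 0 \<and> Re (omegac \<omega> x (cconj x) / \<i>) > 0)"

definition symplectic :: "(real^2 \<Rightarrow> real^2 \<Rightarrow> real) \<Rightarrow> real^2^2 \<Rightarrow> bool" where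
  "symplectic \<omega> g \<longleftrightarrow> invertible g \<and> (\<forall>x y. \<omega> (g *v x) (g *v y) = \<omega> x y)"

text \<open>pi_{Eb,Ea}: restriction to Eb of the projection onto Ea with kernel conj(Eb).\<close>
definition proj_pol :: "(complex^2) set \<Rightarrow> (complex^2) set \<Rightarrow> complex^2 \<Rightarrow> complex^2" where
  "proj_pol Eb Ea u = (THE w. w \<in> Ea \<and> u - w \<in> cconj ` Eb)"

text \<open>Determinant of a complex-linear endomorphism T of a complex line E
  (a Lagrangian of a 2-dimensional symplectic space is a complex line):
  the scalar by which T acts on E.\<close>
definition det_line :: "(complex^2) set \<Rightarrow> (complex^2 \<Rightarrow> complex^2) \<Rightarrow> complex" where
  "det_line E T = (THE c. \<forall>v\<in>E. T v = c *s v)"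

definition in_Mp :: "(real^2 \<Rightarrow> real^2 \<Rightarrow> real) \<Rightarrow> (complex^2) set \<Rightarrow> real^2^2 \<Rightarrow> complex \<Rightarrow> bool" where
  "in_Mp \<omega> E g z \<longleftrightarrow> symplectic \<omega> g \<and>
     z ^ 2 = det_line E (\<lambda>u. cmat (matrix_inv g) *v proj_pol E ((\<lambda>v. cmat g *v v) ` E) u)"

definition in_Mp_star :: "(real^2 \<Rightarrow> real^2 \<Rightarrow> real) \<Rightarrow> (complex^2) set \<Rightarrow> real^2^2 \<Rightarrow> complex \<Rightarrow> bool" where
  "in_Mp_star \<omega> E g z \<longleftrightarrow> in_Mp \<omega> E g z \<and> invertible (mat 1 - g)"

definition sym_j :: "(real^2 \<Rightarrow> real^2 \<Rightarrow> real) \<Rightarrow> real^2^2 \<Rightarrow> (real^2^2) set" where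
  "sym_j \<omega> j = {A. \<forall>X Y. \<omega> (A *v X) (j *v Y) = \<omega> X (j *v (A *v Y))}"

definition half_plus_iA :: "real^2^2 \<Rightarrow> complex^2^2" where
  "half_plus_iA A = mat (1/2) + (\<chi> i k. \<i> * complex_of_real (A $ i $ k))"

definition det_sqrt :: "(real^2 \<Rightarrow> real^2 \<Rightarrow> real) \<Rightarrow> real^2^2 \<Rightarrow> real^2^2 \<Rightarrow> complex" where
  "det_sqrt \<omega> j A = (THE r. \<exists>f. continuous_on (sym_j \<omega> j) f \<and>
      (\<forall>B\<in>sym_j \<omega> j. (f B) ^ 2 = det (half_plus_iA B)) \<and>
      Im (f 0) = 0 \<and> Re (f 0) > 0 \<and> f A = r)"

definition A_of :: "real^2^2 \<Rightarrow> real^2^2 \<Rightarrow> real^2^2" where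
  "A_of j g = (1/2) *\<^sub>R ((mat 1 + g) ** matrix_inv (mat 1 - g) ** j)"

text \<open>The index m(g,z) \<in> Z/4Z, represented by its representative in {0..3}.\<close>
definition mp_index :: "(real^2 \<Rightarrow> real^2 \<Rightarrow> real) \<Rightarrow> real^2^2 \<Rightarrow> real^2^2 \<Rightarrow> complex \<Rightarrow> int" where
  "mp_index \<omega> j g z = (THE m. 0 \<le> m \<and> m < 4 \<and>
      z * det_sqrt \<omega> j (A_of j g) = \<i> powi m / complex_of_real (sqrt \<bar>det (mat 1 - g)\<bar>))"

end

theory Submission
  imports Defs
begin

text \<open>
  In coordinates the symplectic form is c det with c nonzero, so every
  symplectic g has det g = 1 and det(id - g) = 2 - tr g, and the complex structure j
  satisfies j22 = -j11 and j11^2 + j12 j21 = -1.  The argument has four steps.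

  (1) sym(S,j) is the kernel of a linear form, hence convex; on it det(1/2 id + iB)
      never lies on the closed negative axis.  By uniqueness of continuous square roots on
      connected sets, det^{1/2}(1/2 id + iA) is the principal square root csqrt.
  (2) E is the complex line spanned by v = (j12, i - j11).  Computing the projection
      pi_{E,gE} by Cramer's rule gives z^2 explicitly; with the explicit Cayley formula for
      A(g) this yields the key identity z^2 det(1/2 id + iA(g)) = -1/det(id - g).
  (3) So w = z det^{1/2}(1/2 id + iA(g)) |det(id - g)|^{1/2} satisfies w^2 = 1 if tr g > 2
      and w^2 = -1 otherwise; w = i^m with m = m(g,z), and m is even iff tr g > 2.
  (4) The principal square root has argument in (-pi/2, pi/2), and arg z lies in
      [k pi/2, (k+1) pi/2), so m is congruent to k or k+1 modulo 4; the parity of m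
      selects which, giving the formula of the theorem.
\<close>

lemma matrix_mult_2x2:
  "((A::'a::semiring_1^2^2) ** B) $ i $ k = A$i$1 * B$1$k + A$i$2 * B$2$k"
  by (simp add: matrix_matrix_mult_def sum_2)

lemma matrix_vector_mult_2:
  "((A::'a::semiring_1^2^2) *v x) $ i = A$i$1 * x$1 + A$i$2 * x$2"
  by (simp add: matrix_vector_mult_def sum_2)

lemma mat_2x2_entry: "(mat c :: 'a::zero^2^2) $ i $ k = (if i = k then c else 0)"
  by (simp add: mat_def)

lemma vec2_eq_iff: "(x::'a^2) = y \<longleftrightarrow> x$1 = y$1 \<and> x$2 = y$2"
  by (simp add: vec_eq_iff forall_2)

lemma mat2_eq_iff:
  "(A::'a^2^2) = B \<longleftrightarrow> A$1$1 = B$1$1 \<and> A$1$2 = B$1$2 \<and> A$2$1 = B$2$1 \<and> A$2$2 = B$2$2"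
  by (simp add: vec_eq_iff forall_2)

lemma trace_2x2: "trace (A::'a::semiring_1^2^2) = A$1$1 + A$2$2"
  by (simp add: trace_def sum_2)

lemma symplectic_form_coord:
  assumes "symplectic_form \<omega>"
  obtains c where "c \<noteq> 0" "\<And>x y. \<omega> x y = c * (x$1 * y$2 - x$2 * y$1)"
proof -
  let ?e1 = "axis 1 1 :: real^2" and ?e2 = "axis 2 1 :: real^2"
  define c where "c = \<omega> ?e1 ?e2"
  have l1: "linear (\<lambda>x. \<omega> x y)" and l2: "linear (\<lambda>y. \<omega> x y)"
    and anti: "\<omega> x y = - \<omega> y x" for x y
    using assms unfolding symplectic_form_def by blast+
  have basis: "u = u$1 *\<^sub>R ?e1 + u$2 *\<^sub>R ?e2" for u :: "real^2"
    by (simp add: vec2_eq_iff axis_def)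
  have diag: "\<omega> ?e1 ?e1 = 0" "\<omega> ?e2 ?e2 = 0"
    using anti[of ?e1 ?e1] anti[of ?e2 ?e2] by linarith+
  have coord: "\<omega> x y = c * (x$1 * y$2 - x$2 * y$1)" for x y
  proof -
    have "\<omega> x y = \<omega> (x$1 *\<^sub>R ?e1 + x$2 *\<^sub>R ?e2) (y$1 *\<^sub>R ?e1 + y$2 *\<^sub>R ?e2)"
      using basis[of x] basis[of y] by simp
    also have "\<dots> = x$1 * (y$1 * \<omega> ?e1 ?e1 + y$2 * \<omega> ?e1 ?e2)
                    + x$2 * (y$1 * \<omega> ?e2 ?e1 + y$2 * \<omega> ?e2 ?e2)"
      by (simp add: linear_add[OF l1] linear_scale[OF l1] linear_add[OF l2]
          linear_scale[OF l2] algebra_simps)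
    finally show ?thesis
      using diag anti[of ?e2 ?e1] unfolding c_def by (simp add: algebra_simps)
  qed
  have "c \<noteq> 0"
  proof
    assume "c = 0"
    hence "\<forall>y. \<omega> ?e1 y = 0" using coord by simp
    hence "?e1 = 0" using assms unfolding symplectic_form_def by blast
    thus False by (simp add: axis_def vec2_eq_iff)
  qed
  with coord show thesis using that by blast
qed

lemma symplectic_det:
  assumes "symplectic_form \<omega>" and "symplectic \<omega> g"
  shows "det g = 1"
proof -
  obtain c where c: "c \<noteq> 0" and \<omega>: "\<And>x y. \<omega> x y = c * (x$1 * y$2 - x$2 * y$1)"
    using symplectic_form_coord[OF assms(1)] by blast
  have "\<omega> (g *v axis 1 1) (g *v axis 2 1) = \<omega> (axis 1 1) (axis 2 1)"
    using assms(2) unfolding symplectic_def by blast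
  hence "c * det g = c * 1"
    unfolding \<omega> det_2 by (simp add: matrix_vector_mult_2 axis_def algebra_simps)
  with c show ?thesis by simp
qed

lemma det_id_minus:
  assumes "det (g::real^2^2) = 1"
  shows "det (mat 1 - g) = 2 - trace g"
  using assms unfolding det_2 trace_2x2 by (simp add: mat_2x2_entry algebra_simps)

lemma complex_structure_entries:
  fixes j :: "real^2^2"
  assumes "j ** j = - mat 1"
  shows "j$1$1 * j$1$1 + j$1$2 * j$2$1 = -1" "j$2$2 = - j$1$1" "j$1$2 \<noteq> 0"
proof -
  from assms have e: "(j**j)$1$1 = -1" "(j**j)$1$2 = 0" by (simp_all add: mat_2x2_entry)
  show sq: "j$1$1 * j$1$1 + j$1$2 * j$2$1 = -1" using e by (simp add: matrix_mult_2x2)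
  show q: "j$1$2 \<noteq> 0"
  proof
    assume "j$1$2 = 0"
    with sq have "j$1$1 * j$1$1 = -1" by simp
    moreover have "j$1$1 * j$1$1 \<ge> 0" by simp
    ultimately show False by linarith
  qed
  have "j$1$2 * (j$1$1 + j$2$2) = 0" using e by (simp add: matrix_mult_2x2 algebra_simps)
  with q show "j$2$2 = - j$1$1" by simp
qed

text \<open>sym(S,j) is cut out by one linear equation: B is symmetric for omega(X, jY) iff
  sym_defect j B = 0.\<close>
definition sym_defect :: "real^2^2 \<Rightarrow> real^2^2 \<Rightarrow> real" where
  "sym_defect j B = - j$1$1 * B$1$1 - j$1$2 * B$2$1 - j$2$1 * B$1$2 + j$1$1 * B$2$2"

lemma sym_j_iff:
  assumes "symplectic_form \<omega>" and "j$2$2 = - j$1$1"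
  shows "B \<in> sym_j \<omega> j \<longleftrightarrow> sym_defect j B = 0"
proof -
  obtain c where c: "c \<noteq> 0" and \<omega>: "\<And>x y. \<omega> x y = c * (x$1 * y$2 - x$2 * y$1)"
    using symplectic_form_coord[OF assms(1)] by blast
  have defect: "\<omega> (B *v X) (j *v Y) - \<omega> X (j *v (B *v Y))
                = c * sym_defect j B * (X$1 * Y$2 - X$2 * Y$1)" for X Y
    unfolding \<omega> using assms(2) by (simp add: matrix_vector_mult_2 sym_defect_def algebra_simps)
  show ?thesis
  proof
    assume "B \<in> sym_j \<omega> j"
    hence "c * sym_defect j B * ((axis 1 1 :: real^2)$1 * (axis 2 1 :: real^2)$2
             - (axis 1 1 :: real^2)$2 * (axis 2 1 :: real^2)$1) = 0"
      unfolding defect[symmetric] sym_j_def by simp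
    thus "sym_defect j B = 0" using c by (simp add: axis_def)
  qed (use defect in \<open>simp add: sym_j_def\<close>)
qed

lemma det_half_plus_iA: "det (half_plus_iA B) = Complex (1/4 - det B) (trace B / 2)"
  by (simp add: det_2 trace_2x2 half_plus_iA_def mat_2x2_entry complex_eq_iff algebra_simps)

text \<open>A traceless element of sym(S,j) has nonpositive determinant (it is symmetric for
  a scalar product, hence diagonalizable with eigenvalues a and -a).\<close>
lemma sym_j_traceless_det_nonpos:
  fixes j B :: "real^2^2"
  assumes j: "j ** j = - mat 1" and B: "sym_defect j B = 0" "trace B = 0"
  shows "det B \<le> 0"
proof -
  define p q r where "p = j$1$1" and "q = j$1$2" and "r = j$2$1"
  have qr: "q * r = - 1 - p * p" and q: "q \<noteq> 0"
    using complex_structure_entries[OF j] unfolding p_def q_def r_def by auto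
  have b22: "B$2$2 = - B$1$1" using B(2) by (simp add: trace_2x2)
  have qb: "q * B$2$1 = - r * B$1$2 - 2 * p * B$1$1"
    using B(1) b22 unfolding sym_defect_def p_def q_def r_def by (simp add: algebra_simps)
  have "q * q * (- det B) = q * q * (B$1$1)\<^sup>2 + q * B$1$2 * (q * B$2$1)"
    unfolding det_2 b22 by (simp add: algebra_simps power2_eq_square)
  also have "\<dots> = q * q * (B$1$1)\<^sup>2 - (q * r) * (B$1$2)\<^sup>2 - 2 * p * q * B$1$1 * B$1$2"
    unfolding qb by (simp add: algebra_simps power2_eq_square)
  also have "\<dots> = (q * B$1$1 - p * B$1$2)\<^sup>2 + (B$1$2)\<^sup>2"
    unfolding qr by (simp add: algebra_simps power2_eq_square)
  finally have "q * q * (- det B) \<ge> 0" by simp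
  moreover have "q * q > 0" using q by (auto simp: zero_less_mult_iff linorder_neq_iff)
  ultimately show ?thesis using zero_le_mult_iff[of "q * q" "- det B"] by linarith
qed

text \<open>Consequently det(1/2 id + iB) avoids the closed negative real axis on sym(S,j), so
  the principal square root is continuous along it.\<close>
lemma det_half_plus_iA_not_nonpos:
  assumes "j ** j = - mat 1" and "sym_defect j B = 0"
  shows "det (half_plus_iA B) \<notin> \<real>\<^sub>\<le>\<^sub>0"
proof
  assume "det (half_plus_iA B) \<in> \<real>\<^sub>\<le>\<^sub>0"
  hence "trace B = 0" and "1/4 \<le> det B"
    unfolding det_half_plus_iA complex_nonpos_Reals_iff by auto
  with sym_j_traceless_det_nonpos[OF assms] show False by simp
qed

lemma continuous_sqrt_unique:
  fixes f h :: "'a::topological_space \<Rightarrow> complex"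
  assumes S: "connected S" and cont: "continuous_on S f" "continuous_on S h"
    and sq: "\<And>x. x \<in> S \<Longrightarrow> (f x)\<^sup>2 = (h x)\<^sup>2" and nz: "\<And>x. x \<in> S \<Longrightarrow> h x \<noteq> 0"
    and a: "a \<in> S" "f a = h a" and b: "b \<in> S"
  shows "f b = h b"
proof -
  define q where "q x = f x / h x" for x
  have "continuous_on S q"
    unfolding q_def using cont nz by (intro continuous_on_divide) auto
  moreover have "q ` S \<subseteq> {1, -1}"
  proof (rule image_subsetI)
    fix x assume "x \<in> S"
    have "(q x)\<^sup>2 = 1" unfolding q_def using sq nz \<open>x \<in> S\<close> by (simp add: power_divide)
    thus "q x \<in> {1, -1}" using power2_eq_1_iff by blast
  qed
  hence "finite (q ` S)" by (rule finite_subset) simp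
  ultimately have "q constant_on S" using continuous_finite_range_constant[OF S] by blast
  moreover have "q a = 1" unfolding q_def using a nz by simp
  ultimately have "q b = 1" using a b unfolding constant_on_def by force
  thus ?thesis unfolding q_def using nz[OF b] by simp
qed

lemma sym_j_convex:
  assumes "symplectic_form \<omega>" and "j$2$2 = - j$1$1"
  shows "convex (sym_j \<omega> j)"
proof (rule convexI)
  fix x y u v assume "x \<in> sym_j \<omega> j" "y \<in> sym_j \<omega> j"
  hence "sym_defect j x = 0" "sym_defect j y = 0" using sym_j_iff[OF assms] by auto
  moreover have "sym_defect j (u *\<^sub>R x + v *\<^sub>R y) = u * sym_defect j x + v * sym_defect j y"
    by (simp add: sym_defect_def algebra_simps)
  ultimately show "u *\<^sub>R x + v *\<^sub>R y \<in> sym_j \<omega> j" using sym_j_iff[OF assms] by simp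
qed

lemma det_sqrt_eq_csqrt:
  assumes \<omega>: "symplectic_form \<omega>" and j: "j ** j = - mat 1" and A: "A \<in> sym_j \<omega> j"
  shows "det_sqrt \<omega> j A = csqrt (det (half_plus_iA A))"
proof -
  define S where "S = sym_j \<omega> j"
  define F where "F B = det (half_plus_iA B)" for B
  have j22: "j$2$2 = - j$1$1" using complex_structure_entries[OF j] by simp
  have inS: "B \<in> S \<longleftrightarrow> sym_defect j B = 0" for B
    unfolding S_def by (rule sym_j_iff[OF \<omega> j22])
  have F_nz: "F B \<noteq> 0" and F_npos: "F B \<notin> \<real>\<^sub>\<le>\<^sub>0" if "B \<in> S" for B
    using det_half_plus_iA_not_nonpos[OF j] that unfolding inS F_def by force+
  have "continuous_on S F"
    unfolding F_def det_half_plus_iA unfolding det_2 trace_2x2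
    by (intro continuous_intros continuous_on_Complex) simp
  hence cont_root: "continuous_on S (\<lambda>B. csqrt (F B))"
    by (rule continuous_on_compose2[OF continuous_on_csqrt]) (use F_npos in blast)
  have conn: "connected S"
    unfolding S_def by (rule convex_connected[OF sym_j_convex[OF \<omega> j22]])
  have S0: "0 \<in> S" unfolding inS sym_defect_def by simp
  have F0: "F 0 = 1/4"
    unfolding F_def det_half_plus_iA by (simp add: det_2 trace_2x2 complex_eq_iff)
  have root0: "csqrt (F 0) = 1/2"
    unfolding F0 using csqrt_of_real[of "1/4"] by (simp add: real_sqrt_divide)
  have uniq: "r = csqrt (F A)"
    if "continuous_on S f" "\<forall>B\<in>S. (f B)\<^sup>2 = F B" "Im (f 0) = 0" "Re (f 0) > 0" "f A = r"
    for f r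
  proof -
    have "(f 0)\<^sup>2 = (1/2)\<^sup>2" using that(2) S0 root0 by (metis power2_csqrt)
    hence "f 0 = csqrt (F 0)" unfolding root0 power2_eq_iff using that(4) by auto
    moreover have "(f B)\<^sup>2 = (csqrt (F B))\<^sup>2" if "B \<in> S" for B
      using \<open>\<forall>B\<in>S. (f B)\<^sup>2 = F B\<close> that by simp
    ultimately have "f A = csqrt (F A)"
      using continuous_sqrt_unique[OF conn that(1) cont_root _ _ S0 _ A[folded S_def]] F_nz
      by auto
    thus ?thesis using that(5) by simp
  qed
  show ?thesis unfolding det_sqrt_def S_def[symmetric] F_def[symmetric]
  proof (rule the_equality)
    show "\<exists>f. continuous_on S f \<and> (\<forall>B\<in>S. (f B)\<^sup>2 = F B) \<and> Im (f 0) = 0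
              \<and> Re (f 0) > 0 \<and> f A = csqrt (F A)"
      using cont_root by (intro exI[of _ "\<lambda>B. csqrt (F B)"]) (simp add: root0)
  qed (use uniq in blast)
qed

lemma matrix_inv_left:
  fixes A :: "'a::comm_ring_1^'n^'n"
  assumes "invertible A"
  shows "matrix_inv A ** A = mat 1"
  using someI_ex[OF assms[unfolded invertible_def]] unfolding matrix_inv_def by auto

lemma matrix_inv_eq:
  fixes A :: "'a::comm_ring_1^'n^'n"
  assumes "invertible A" and "A ** M = mat 1"
  shows "matrix_inv A = M"
proof -
  have "matrix_inv A = (matrix_inv A ** A) ** M"
    by (metis assms(2) matrix_mul_assoc matrix_mul_rid)
  thus ?thesis by (simp add: matrix_inv_left[OF assms(1)] matrix_mul_lid)
qed

text \<open>For det g = 1 and t = tr g we have (id - g)^-1 = ((1 - t) id + g)/(2 - t)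
  (Cayley-Hamilton), so A(g) = (2g - t id) j / (2(2 - t)).\<close>
lemma A_of_explicit:
  fixes g j :: "real^2^2"
  assumes dg: "det g = 1" and inv: "invertible (mat 1 - g)"
  shows "A_of j g = (1 / (2 * (2 - trace g))) *\<^sub>R ((2 *\<^sub>R g - trace g *\<^sub>R mat 1) ** j)"
proof -
  define t where "t = trace g"
  have t2: "2 - t \<noteq> 0"
    using inv det_id_minus[OF dg] unfolding t_def by (simp add: invertible_det_nz)
  have d: "g$1$1 * g$2$2 - g$1$2 * g$2$1 = 1" and t: "t = g$1$1 + g$2$2"
    using dg unfolding det_2 t_def trace_2x2 by simp_all
  have inv_eq: "matrix_inv (mat 1 - g) = (1 / (2 - t)) *\<^sub>R ((1 - t) *\<^sub>R mat 1 + g)"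
    using inv by (rule matrix_inv_eq) (use t2 d in \<open>simp add: t mat2_eq_iff matrix_mult_2x2
        mat_2x2_entry divide_simps, simp add: algebra_simps\<close>)
  have "(mat 1 + g) ** matrix_inv (mat 1 - g) = (1 / (2 - t)) *\<^sub>R (2 *\<^sub>R g - t *\<^sub>R mat 1)"
    unfolding inv_eq using t2 d by (simp add: t mat2_eq_iff matrix_mult_2x2 mat_2x2_entry divide_simps)
      (simp add: algebra_simps)
  thus ?thesis unfolding A_of_def t_def[symmetric]
    by (simp add: scalar_matrix_assoc[symmetric])
qed

lemma det_2x2_scaleR: "det (c *\<^sub>R (M::real^2^2)) = c\<^sup>2 * det M"
  by (simp add: det_2 power2_eq_square algebra_simps)

lemma det_2x2_shift:
  "det (a *\<^sub>R M - b *\<^sub>R mat 1 :: real^2^2) = a\<^sup>2 * det M - a * b * trace M + b\<^sup>2"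
  by (simp add: det_2 trace_2x2 mat_2x2_entry power2_eq_square algebra_simps)

lemma complex_structure_det:
  fixes j :: "real^2^2"
  assumes "j ** j = - mat 1"
  shows "det j = 1"
  using complex_structure_entries[OF assms] unfolding det_2 by simp

lemma A_of_props:
  fixes g j :: "real^2^2"
  assumes j: "j ** j = - mat 1" and dg: "det g = 1" and inv: "invertible (mat 1 - g)"
  shows "sym_defect j (A_of j g) = 0"
    "trace (A_of j g) = trace (g ** j) / (2 - trace g)"
    "det (A_of j g) = (2 + trace g) / (4 * (2 - trace g))"
proof -
  define t where "t = trace g"
  define u where "u = 1 / (2 * (2 - t))"
  define M where "M = 2 *\<^sub>R g - t *\<^sub>R mat 1"
  have t2: "2 - t \<noteq> 0"
    using inv det_id_minus[OF dg] unfolding t_def by (simp add: invertible_det_nz)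
  have t: "t = g$1$1 + g$2$2" unfolding t_def trace_2x2 ..
  have j22: "j$2$2 = - j$1$1" using complex_structure_entries[OF j] by simp
  have A: "A_of j g = u *\<^sub>R (M ** j)"
    unfolding u_def M_def t_def by (rule A_of_explicit[OF dg inv])
  show "sym_defect j (A_of j g) = 0"
    unfolding A M_def sym_defect_def using j22
    by (simp add: t matrix_mult_2x2 mat_2x2_entry algebra_simps)
  show "trace (A_of j g) = trace (g ** j) / (2 - trace g)"
    unfolding A M_def t_def[symmetric] trace_2x2 using j22 t2
    by (simp add: t u_def matrix_mult_2x2 mat_2x2_entry divide_simps) (simp add: algebra_simps)
  have "det M = 4 - t\<^sup>2"
    unfolding M_def det_2x2_shift dg t_def by (simp add: power2_eq_square)
  hence "det (A_of j g) = u\<^sup>2 * (4 - t\<^sup>2)"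
    unfolding A det_2x2_scaleR det_mul complex_structure_det[OF j] by simp
  also have "\<dots> = (2 + t) / (4 * (2 - t))"
    unfolding u_def power2_eq_square using t2 by (simp add: divide_simps) (simp add: algebra_simps)
  finally show "det (A_of j g) = (2 + trace g) / (4 * (2 - trace g))"
    unfolding t_def .
qed
definition det2 :: "complex^2 \<Rightarrow> complex^2 \<Rightarrow> complex" where
  "det2 x y = x$1 * y$2 - x$2 * y$1"

lemma det2_cramer:
  assumes "det2 x y \<noteq> 0"
  shows "u = (det2 u y / det2 x y) *s x + (det2 x u / det2 x y) *s y"
proof -
  have "det2 x y * u$1 = det2 u y * x$1 + det2 x u * y$1"
    and "det2 x y * u$2 = det2 u y * x$2 + det2 x u * y$2"
    unfolding det2_def by (simp_all add: algebra_simps)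
  thus ?thesis unfolding vec2_eq_iff using assms by (simp add: field_simps)
qed

lemma det2_linear_left:
  "det2 (a *s x - b *s y) w = a * det2 x w - b * det2 y w"
  "det2 (c *s w) w = 0"
  unfolding det2_def by (simp_all add: algebra_simps)

lemma cmat_mult: "cmat A ** cmat B = cmat (A ** B)"
  unfolding mat2_eq_iff by (simp add: cmat_def matrix_mult_2x2)

lemma cmat_one: "cmat (mat 1) = mat 1"
  unfolding mat2_eq_iff by (simp add: cmat_def mat_2x2_entry)

lemma matrix_vector_mult_smult: "(M::complex^2^2) *v (c *s x) = c *s (M *v x)"
  unfolding vec2_eq_iff by (simp add: matrix_vector_mult_2 algebra_simps)

lemma cconj_smult: "cconj (c *s x) = cnj c *s cconj x"
  unfolding vec2_eq_iff cconj_def by simp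

text \<open>The i-eigenvector of the complex structure j; it spans the polarization E.\<close>
definition jvec :: "real^2^2 \<Rightarrow> complex^2" where
  "jvec j = vector [complex_of_real (j$1$2), \<i> - complex_of_real (j$1$1)]"

lemma eigenspace_jvec:
  fixes j :: "real^2^2"
  assumes j: "j ** j = - mat 1"
  shows "{u. cmat j *v u = \<i> *s u} = range (\<lambda>c. c *s jvec j)"
proof -
  define p q r where "p = j$1$1" and "q = j$1$2" and "r = j$2$1"
  have "q * r = -1 - p * p" and q: "complex_of_real q \<noteq> 0"
    using complex_structure_entries[OF j] unfolding p_def q_def r_def by auto
  hence qr: "complex_of_real q * complex_of_real r = -1 - complex_of_real p * complex_of_real p"
    by (metis of_real_1 of_real_diff of_real_minus of_real_mult)
  have eigen: "cmat j *v u = \<i> *s u \<longleftrightarrow>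
     of_real p * u$1 + of_real q * u$2 = \<i> * u$1 \<and> of_real r * u$1 - of_real p * u$2 = \<i> * u$2"
    for u
    unfolding vec2_eq_iff using complex_structure_entries(2)[OF j]
    by (simp add: matrix_vector_mult_2 cmat_def p_def q_def r_def)
  show ?thesis
  proof (intro set_eqI iffI)
    fix u assume "u \<in> {u. cmat j *v u = \<i> *s u}"
    hence "of_real p * u$1 + of_real q * u$2 = \<i> * u$1" using eigen by blast
    hence "u = (u$1 / of_real q) *s jvec j"
      unfolding vec2_eq_iff jvec_def p_def[symmetric] q_def[symmetric] using q
      by (simp add: field_simps)
    thus "u \<in> range (\<lambda>c. c *s jvec j)" by blast
  next
    fix u assume "u \<in> range (\<lambda>c. c *s jvec j)"
    then obtain c where "u = c *s jvec j" by blast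
    hence "of_real p * u$1 + of_real q * u$2 = \<i> * u$1 \<and> of_real r * u$1 - of_real p * u$2 = \<i> * u$2"
      unfolding jvec_def p_def[symmetric] q_def[symmetric] by (simp add: algebra_simps qr)
    thus "u \<in> {u. cmat j *v u = \<i> *s u}" using eigen by blast
  qed
qed

text \<open>For a line E = C v, the projection onto gE along the conjugate line maps v to
  alpha g v with alpha = det2 v vbar / det2 (g v) vbar (Cramer's rule); hence the
  determinant of g^-1 pi_{E,gE} on E is alpha.\<close>
lemma det_line_projection:
  fixes g :: "real^2^2" and v :: "complex^2"
  defines "gv \<equiv> cmat g *v v" and "vb \<equiv> cconj v"
  assumes E: "E = range (\<lambda>c. c *s v)" and v: "v \<noteq> 0" and g: "invertible g"
    and N: "det2 gv vb \<noteq> 0"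
  shows "det_line E (\<lambda>u. cmat (matrix_inv g) *v proj_pol E ((\<lambda>w. cmat g *v w) ` E) u)
       = det2 v vb / det2 gv vb"
proof -
  define \<alpha> where "\<alpha> = det2 v vb / det2 gv vb"
  define \<beta> where "\<beta> = det2 gv v / det2 gv vb"
  have decomp: "v = \<alpha> *s gv + \<beta> *s vb"
    unfolding \<alpha>_def \<beta>_def by (rule det2_cramer[OF N])
  have gE: "(\<lambda>w. cmat g *v w) ` E = range (\<lambda>c. c *s gv)"
    unfolding E gv_def by (auto simp: matrix_vector_mult_smult image_iff)
  have cE: "cconj ` E = range (\<lambda>c. c *s vb)"
  proof (intro set_eqI iffI)
    fix x assume "x \<in> range (\<lambda>c. c *s vb)"
    then obtain c where "x = c *s vb" by blast
    hence "x = cconj (cnj c *s v)" unfolding vb_def by (simp add: cconj_smult)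
    thus "x \<in> cconj ` E" unfolding E by blast
  qed (auto simp: E vb_def cconj_smult)
  have proj: "proj_pol E ((\<lambda>w. cmat g *v w) ` E) (\<mu> *s v) = (\<mu> * \<alpha>) *s gv" for \<mu>
    unfolding proj_pol_def gE cE
  proof (rule the_equality)
    have "\<mu> *s v - (\<mu> * \<alpha>) *s gv = (\<mu> * \<beta>) *s vb"
      using decomp unfolding vec2_eq_iff by (simp add: algebra_simps)
    thus "(\<mu> * \<alpha>) *s gv \<in> range (\<lambda>c. c *s gv) \<and> \<mu> *s v - (\<mu> * \<alpha>) *s gv \<in> range (\<lambda>c. c *s vb)"
      by blast
  next
    fix w assume "w \<in> range (\<lambda>c. c *s gv) \<and> \<mu> *s v - w \<in> range (\<lambda>c. c *s vb)"
    then obtain c n where w: "w = c *s gv" and n: "\<mu> *s v - c *s gv = n *s vb" by blast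
    have "\<mu> * det2 v vb - c * det2 gv vb = 0"
      using arg_cong[OF n, of "\<lambda>x. det2 x vb"] by (simp add: det2_linear_left)
    hence "c = \<mu> * \<alpha>" unfolding \<alpha>_def using N by (simp add: field_simps)
    thus "w = (\<mu> * \<alpha>) *s gv" using w by simp
  qed
  have inv: "cmat (matrix_inv g) *v (cmat g *v x) = x" for x
    by (simp add: matrix_vector_mul_assoc cmat_mult matrix_inv_left[OF g] cmat_one)
  have acts: "cmat (matrix_inv g) *v proj_pol E ((\<lambda>w. cmat g *v w) ` E) u = \<alpha> *s u"
    if "u \<in> E" for u
  proof -
    obtain \<mu> where u: "u = \<mu> *s v" using \<open>u \<in> E\<close> unfolding E by blast
    show ?thesis unfolding u proj gv_def matrix_vector_mult_smult inv by (simp add: mult.commute)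
  qed
  have "v \<in> E" unfolding E by (metis rangeI vector_smult_lid)
  show ?thesis unfolding \<alpha>_def[symmetric] det_line_def
  proof (rule the_equality)
    fix c assume "\<forall>u\<in>E. cmat (matrix_inv g) *v proj_pol E ((\<lambda>w. cmat g *v w) ` E) u = c *s u"
    with acts[OF \<open>v \<in> E\<close>] \<open>v \<in> E\<close> v show "c = \<alpha>" by auto
  qed (use acts in blast)
qed

lemma det2_jvec_conj:
  "det2 (jvec j) (cconj (jvec j)) = - 2 * \<i> * of_real (j$1$2)"
  unfolding jvec_def cconj_def det2_def by (simp add: complex_eq_iff)

lemma det2_g_jvec_conj:
  fixes g j :: "real^2^2"
  assumes "j ** j = - mat 1"
  shows "det2 (cmat g *v jvec j) (cconj (jvec j))
       = - of_real (j$1$2) * (of_real (trace (g ** j)) + \<i> * of_real (trace g))"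
proof -
  note jf = complex_structure_entries[OF assms]
  have qr: "j$1$2 * j$2$1 = -1 - j$1$1 * j$1$1" using jf(1) by linarith
  show ?thesis
    unfolding jvec_def cconj_def det2_def trace_2x2 matrix_mult_2x2 jf(2)
    by (simp add: matrix_vector_mult_2 cmat_def complex_eq_iff algebra_simps qr)
qed



text \<open>Both factors are
  explicit in terms of t = tr g and K = tr(gj): z^2 = 2i/(K + it) by the projection
  formula, and det(1/2 id + iA(g)) = i(K + it)/(2(2 - t)) by the invariants of A(g).\<close>
lemma Mp_square_identity:
  fixes g j :: "real^2^2"
  assumes \<omega>: "symplectic_form \<omega>" and j: "j ** j = - mat 1"
    and E: "E = {u. cmat j *v u = \<i> *s u}" and Mp: "in_Mp \<omega> E g z"
    and inv: "invertible (mat 1 - g)"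
  shows "z\<^sup>2 * det (half_plus_iA (A_of j g)) = - 1 / of_real (det (mat 1 - g))"
proof -
  have g: "invertible g" and dg: "det g = 1"
    using Mp symplectic_det[OF \<omega>] unfolding in_Mp_def symplectic_def by auto
  define t K where "t = trace g" and "K = trace (g ** j)"
  define D where "D = det (half_plus_iA (A_of j g))"
  have t2: "2 - t \<noteq> 0"
    using inv det_id_minus[OF dg] unfolding t_def by (simp add: invertible_det_nz)
  note A = A_of_props[OF j dg inv, folded t_def K_def]
  define X T where "X = of_real K + \<i> * of_real t" and "T = complex_of_real t"
  have D: "D = \<i> * X / (2 * (2 - T))"
  proof -
    have "D = Complex (1/4 - (2 + t) / (4 * (2 - t))) (K / (2 - t) / 2)"
      unfolding D_def det_half_plus_iA A(2) A(3) ..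
    also have "1/4 - (2 + t) / (4 * (2 - t)) = - t / (2 * (2 - t))"
      using t2 by (simp add: field_simps)
    finally show ?thesis unfolding X_def T_def using t2 by (simp add: complex_eq_iff field_simps)
  qed
  have "D \<noteq> 0" using det_half_plus_iA_not_nonpos[OF j A(1)] unfolding D_def by auto
  hence X: "X \<noteq> 0" unfolding D X_def by auto
  have T: "2 - T \<noteq> 0" using t2 unfolding T_def by (metis of_real_diff of_real_eq_0_iff of_real_numeral)
  define q where "q = complex_of_real (j$1$2)"
  have q: "q \<noteq> 0" using complex_structure_entries(3)[OF j] unfolding q_def by simp
  have N: "det2 (cmat g *v jvec j) (cconj (jvec j)) = - q * X"
    unfolding q_def X_def K_def t_def by (rule det2_g_jvec_conj[OF j])
  have "jvec j \<noteq> 0" using q unfolding jvec_def q_def vec2_eq_iff by simp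
  hence z2: "z\<^sup>2 = (- 2 * \<i> * q) / (- q * X)"
    using Mp det_line_projection[OF E[unfolded eigenspace_jvec[OF j]] _ g] q X
    unfolding in_Mp_def N det2_jvec_conj q_def by simp
  have "z\<^sup>2 * D = - 1 / (2 - T)"
    unfolding z2 D using q X T by (simp add: field_simps)
  thus ?thesis unfolding D_def det_id_minus[OF dg] t_def[symmetric] T_def by simp
qed

lemma square_pm1_power_i:
  fixes w :: complex
  assumes "w\<^sup>2 = (if b then 1 else -1)"
  shows "\<exists>m<4. w = \<i> ^ m \<and> (even m \<longleftrightarrow> b)"
proof (cases b)
  case True
  hence "w = 1 \<or> w = -1" using assms power2_eq_1_iff[of w] by simp
  hence "w = \<i> ^ 0 \<or> w = \<i> ^ 2" by auto
  then obtain m :: nat where "m \<in> {0, 2}" "w = \<i> ^ m" by blast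
  thus ?thesis using True by (intro exI[of _ m]) auto
next
  case False
  hence "(w - \<i>) * (w + \<i>) = 0" using assms by (simp add: algebra_simps power2_eq_square)
  hence "w = \<i> ^ 1 \<or> w = \<i> ^ 3" by (auto simp: power3_eq_cube add_eq_0_iff2)
  then obtain m :: nat where "m \<in> {1, 3}" "w = \<i> ^ m" by blast
  thus ?thesis using False by (intro exI[of _ m]) auto
qed

text \<open>The index is well defined: the powers i^0, ..., i^3 are distinct.\<close>
lemma mp_index_eqI:
  assumes "m < 4" and "det (mat 1 - g) \<noteq> 0"
    and "z * det_sqrt \<omega> j (A_of j g) = \<i> ^ m / of_real (sqrt \<bar>det (mat 1 - g)\<bar>)"
  shows "mp_index \<omega> j g z = int m"
  unfolding mp_index_def
proof (rule the_equality)
  show "0 \<le> int m \<and> int m < 4 \<and>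
        z * det_sqrt \<omega> j (A_of j g) = \<i> powi int m / of_real (sqrt \<bar>det (mat 1 - g)\<bar>)"
    using assms(1,3) by simp
next
  fix n :: int
  assume n: "0 \<le> n \<and> n < 4 \<and>
             z * det_sqrt \<omega> j (A_of j g) = \<i> powi n / of_real (sqrt \<bar>det (mat 1 - g)\<bar>)"
  hence "\<i> powi n = \<i> ^ m" using assms(2,3) by (simp add: field_simps)
  moreover have "n \<in> {0, 1, 2, 3}" and "m \<in> {0, 1, 2, 3}" using n assms(1) by auto
  ultimately show "n = int m" by (auto simp: power_int_def power3_eq_cube complex_eq_iff)
qed

text \<open>The index m(g,z) is determined by a square root of the sign of -det(id - g):
  w = z det^{1/2}(1/2 id + iA(g)) |det(id - g)|^{1/2} satisfies w^2 = -sgn det(id - g)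
  and w = i^m(g,z).  So m(g,z) is even iff tr g > 2.  The factor det^{1/2} is the
  principal square root of a number off the closed negative axis, so its argument lies
  strictly between -pi/2 and pi/2.\<close>
lemma mp_index_witness:
  fixes g j :: "real^2^2"
  assumes \<omega>: "symplectic_form \<omega>" and j: "j ** j = - mat 1"
    and E: "E = {u. cmat j *v u = \<i> *s u}" and Mp: "in_Mp_star \<omega> E g z"
  obtains m s R where "mp_index \<omega> j g z = int m" "even m \<longleftrightarrow> trace g > 2"
    "z * s = \<i> ^ m / of_real R" "R > 0" "s \<noteq> 0" "- (pi/2) < Arg s" "Arg s < pi/2"
proof -
  have Mp': "in_Mp \<omega> E g z" and inv: "invertible (mat 1 - g)"
    using Mp unfolding in_Mp_star_def by auto
  have dg: "det g = 1" using symplectic_det[OF \<omega>] Mp' unfolding in_Mp_def by auto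
  define \<delta> where "\<delta> = det (mat 1 - g)"
  define D where "D = det (half_plus_iA (A_of j g))"
  define s R where "s = csqrt D" and "R = sqrt \<bar>\<delta>\<bar>"
  have \<delta>: "\<delta> = 2 - trace g" "\<delta> \<noteq> 0"
    using det_id_minus[OF dg] inv unfolding \<delta>_def by (auto simp: invertible_det_nz)
  have sym: "sym_defect j (A_of j g) = 0" by (rule A_of_props(1)[OF j dg inv])
  have D: "D \<notin> \<real>\<^sub>\<le>\<^sub>0" unfolding D_def by (rule det_half_plus_iA_not_nonpos[OF j sym])
  have root: "det_sqrt \<omega> j (A_of j g) = s"
    using det_sqrt_eq_csqrt[OF \<omega> j] sym_j_iff[OF \<omega>] complex_structure_entries(2)[OF j] sym
    unfolding s_def D_def by blast
  have "(z * s * of_real R)\<^sup>2 = z\<^sup>2 * D * of_real (R\<^sup>2)"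
    unfolding s_def by (simp add: power_mult_distrib)
  also have "\<dots> = of_real (- \<bar>\<delta>\<bar> / \<delta>)"
    unfolding D_def Mp_square_identity[OF \<omega> j E Mp' inv] R_def \<delta>_def[symmetric] by simp
  also have "- \<bar>\<delta>\<bar> / \<delta> = (if trace g > 2 then 1 else -1)"
    using \<delta> by (auto simp: abs_if divide_simps)
  finally have "(z * s * of_real R)\<^sup>2 = (if trace g > 2 then 1 else -1)" by simp
  then obtain m where m: "m < 4" "z * s * of_real R = \<i> ^ m" "even m \<longleftrightarrow> trace g > 2"
    using square_pm1_power_i by blast
  have "R > 0" unfolding R_def using \<delta> by simp
  hence zs: "z * s = \<i> ^ m / of_real R" using m(2) by (simp add: field_simps)
  have "D \<noteq> 0" and "Arg D \<noteq> pi"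
    using D by (auto simp: Arg_eq_pi_iff complex_nonpos_Reals_iff complex_is_Real_iff)
  hence "s \<noteq> 0" and "- (pi/2) < Arg s" and "Arg s < pi/2"
    unfolding s_def using mpi_less_Arg[of D] Arg_le_pi[of D] by auto
  moreover have "mp_index \<omega> j g z = int m"
    using mp_index_eqI[OF m(1)] \<delta>(2) zs root unfolding \<delta>_def R_def by simp
  ultimately show thesis using that m(3) zs \<open>R > 0\<close> by blast
qed

lemma power_i_exp: "\<i> ^ m = exp (\<i> * of_real (real m * pi / 2))"
proof -
  have "cis (pi / 2) ^ m = cis (real m * (pi / 2))" by (rule Complex.DeMoivre)
  hence "\<i> ^ m = cis (real m * (pi / 2))" by simp
  thus ?thesis by (simp add: cis_conv_exp)
qed

lemma quarter_turn_index:
  fixes \<theta> R :: real and z s :: complex and m :: nat and k :: int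
  assumes z: "is_Arg z \<theta>" and \<theta>: "of_int k * pi / 2 \<le> \<theta>" "\<theta> < (of_int k + 1) * pi / 2"
    and s: "s \<noteq> 0" "- (pi/2) < Arg s" "Arg s < pi/2"
    and zs: "z * s = \<i> ^ m / of_real R" and R: "R > 0"
  shows "int m mod 4 = k mod 4 \<or> int m mod 4 = (k + 1) mod 4"
proof -
  define \<phi> P where "\<phi> = Arg s" and "P = norm z * norm s"
  have z_polar: "z = of_real (norm z) * exp (\<i> * of_real \<theta>)" using z unfolding is_Arg_def .
  have s_polar: "s = of_real (norm s) * exp (\<i> * of_real \<phi>)" unfolding \<phi>_def by (rule Arg_eq[OF s(1)])
  have polar: "z * s = of_real P * exp (\<i> * of_real (\<theta> + \<phi>))"
    by (subst z_polar, subst s_polar) (simp add: P_def exp_add[symmetric] algebra_simps)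
  have "P = norm (z * s)" unfolding polar by (simp add: P_def norm_mult)
  hence "complex_of_real R * of_real P = 1" unfolding zs using R by (simp add: norm_divide norm_power)
  moreover have "of_real R * (of_real P * exp (\<i> * of_real (\<theta> + \<phi>))) = \<i> ^ m"
    using zs polar R by simp
  ultimately have "exp (\<i> * of_real (\<theta> + \<phi>)) = \<i> ^ m"
    by (metis mult.assoc mult_1)
  hence "exp (\<i> * of_real (\<theta> + \<phi>)) = exp (\<i> * of_real (real m * pi / 2))"
    unfolding power_i_exp .
  then obtain n :: int
    where "\<i> * of_real (\<theta> + \<phi>) = \<i> * of_real (real m * pi / 2) + of_int (2 * n) * pi * \<i>"
    unfolding exp_eq by blast
  from arg_cong[OF this, of Im] have "\<theta> + \<phi> = real_of_int (int m + 4 * n) * (pi / 2)"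
    by (simp add: algebra_simps)
  with \<theta> s(2,3) have "real_of_int (k - 1) * (pi / 2) < real_of_int (int m + 4 * n) * (pi / 2)"
    and "real_of_int (int m + 4 * n) * (pi / 2) < real_of_int (k + 2) * (pi / 2)"
    unfolding \<phi>_def by (simp_all add: algebra_simps)
  hence "k - 1 < int m + 4 * n" and "int m + 4 * n < k + 2"
    by (simp_all add: mult_less_cancel_right_pos del: of_int_add of_int_diff of_int_mult)
  hence "int m + 4 * n = k \<or> int m + 4 * n = k + 1" by arith
  thus ?thesis by (metis mod_mult_self2)
qed

lemma even_mod_4_iff: "even ((a::int) mod 4) \<longleftrightarrow> even a"
  by (simp add: even_iff_mod_2_eq_zero mod_mod_cancel)

lemma parity_select:
  fixes m k e :: int
  assumes "m mod 4 = k mod 4 \<or> m mod 4 = (k + 1) mod 4" and "even m \<longleftrightarrow> even e"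
  shows "m mod 4 = (k + (if even (k + e) then 0 else 1)) mod 4"
  using assms(1)
proof
  assume "m mod 4 = k mod 4"
  hence "even m \<longleftrightarrow> even k" by (metis even_mod_4_iff)
  with \<open>m mod 4 = k mod 4\<close> show ?thesis using assms(2) by simp
next
  assume "m mod 4 = (k + 1) mod 4"
  hence "even m \<longleftrightarrow> even (k + 1)" by (metis even_mod_4_iff)
  with \<open>m mod 4 = (k + 1) mod 4\<close> show ?thesis using assms(2) by simp
qed


theorem mainTheorem6:
  fixes \<omega> :: "real^2 \<Rightarrow> real^2 \<Rightarrow> real"
    and E :: "(complex^2) set"
    and j g :: "real^2^2"
    and z :: complex
    and k :: int
  assumes "symplectic_form \<omega>"
    and "positive_polarization \<omega> E"
    and "j ** j = - mat 1"
    and "E = {u. cmat j *v u = \<i> *s u}"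
    and "in_Mp_star \<omega> E g z"
    and "\<exists>r. is_Arg z r \<and> of_int k * pi / 2 \<le> r \<and> r < (of_int k + 1) * pi / 2"
  shows "let \<epsilon> = (if trace g > 2 then 0 else 1 :: int) in
         mp_index \<omega> j g z mod 4 = (k + (if even (k + \<epsilon>) then 0 else 1)) mod 4"
proof -
  obtain m s R where index: "mp_index \<omega> j g z = int m" and parity: "even m \<longleftrightarrow> trace g > 2"
    and zs: "z * s = \<i> ^ m / of_real R" "R > 0" and s: "s \<noteq> 0" "- (pi/2) < Arg s" "Arg s < pi/2"
    using mp_index_witness[OF assms(1,3,4,5)] by blast
  obtain \<theta> where \<theta>: "is_Arg z \<theta>" "of_int k * pi / 2 \<le> \<theta>" "\<theta> < (of_int k + 1) * pi / 2"
    using assms(6) by blast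
  have "int m mod 4 = k mod 4 \<or> int m mod 4 = (k + 1) mod 4"
    by (rule quarter_turn_index[OF \<theta> s zs])
  thus ?thesis unfolding Let_def index
    by (rule parity_select) (use parity in auto)
qed

end
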